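(* Let $1\le p<\infty$ and let $\mathbf u,\mathbf v$ be bounded sequences of non-zero scalars such that $\sum_{n=1}^\infty\frac{1}{|u_1\cdots u_n|^p}<\infty$ and $\sum_{n=1}^\infty\frac1{|v_1\cdots v_n|^p}<\infty$. Consider the weighted backward shifts $B_{\mathbf u},B_{\mathbf v}$ on $\ell_p(\mathbb Z_+)$. The following are equivalent: (1) $B_{\mathbf u}$ and $B_{\mathbf v}$ share a non-zero periodic point, i.e. there is $x\ne0$ and $d_1,d_2\in\mathbb N$ with $B_{\mathbf u}^{d_1}x=x=B_{\mathbf v}^{d_2}x$; (2) there exist $d\in\mathbb N$ and $0\le j\le d-1$ such that $u_{1+j}\cdots u_{dm+j}=v_{1+j}\cdots v_{dm+j}$ for all $m\ge1$; (3) there exist $d\in\mathbb N$, $0\le j\le d-1$ and a non-zero scalar $C$ such that $u_1\cdots u_{dm+j}=C\,v_1\cdots v_{dm+j}$ for all $m\ge0$ (an empty product being equal to $1$).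
   Context: $(e_n)_{n\ge0}$ is the canonical basis of $\ell_p(\mathbb Z_+)$ (real or complex), and $B_{\mathbf w}e_0=0$, $B_{\mathbf w}e_n=w_ne_{n-1}$ for $n\ge1$. *)

theory Defs
  imports "HOL-Analysis.Analysis"
begin

definition in_lp :: "real \<Rightarrow> (nat \<Rightarrow> 'a::real_normed_vector) \<Rightarrow> bool" where
  "in_lp p x \<longleftrightarrow> summable (\<lambda>n. norm (x n) powr p)"

text \<open>Weighted backward shift: (B_w x)_n = w_(n+1) x_(n+1); so B_w e_0 = 0, B_w e_n = w_n e_(n-1).
  Weights are indexed from 1; w 0 is irrelevant.\<close>
definition bws :: "(nat \<Rightarrow> 'a::real_normed_field) \<Rightarrow> (nat \<Rightarrow> 'a) \<Rightarrow> (nat \<Rightarrow> 'a)" where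
  "bws w x = (\<lambda>n. w (Suc n) * x (Suc n))"

end

theory Submission
  imports Defs
begin

text \<open>
  Iterating the shift gives \<open>(B\<^sub>w\<^sup>k x)\<^sub>n = w\<^sub>n\<^sub>+\<^sub>1 \<cdots> w\<^sub>n\<^sub>+\<^sub>k x\<^sub>n\<^sub>+\<^sub>k\<close>. Hence a fixed point \<open>x\<close> of
  \<open>B\<^sub>w\<^sup>d\<close> satisfies \<open>x\<^sub>j = w\<^sub>j\<^sub>+\<^sub>1 \<cdots> w\<^sub>j\<^sub>+\<^sub>d\<^sub>m x\<^sub>j\<^sub>+\<^sub>d\<^sub>m\<close>, so on the residue class \<open>j + d\<nat>\<close> it is
  determined by \<open>x\<^sub>j\<close>. A common periodic point of \<open>B\<^sub>u\<close> and \<open>B\<^sub>v\<close> is a common fixed point of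
  \<open>B\<^sub>u\<^sup>d\<close> and \<open>B\<^sub>v\<^sup>d\<close> for \<open>d = d\<^sub>1 d\<^sub>2\<close>; choosing \<open>j < d\<close> with \<open>x\<^sub>j \<noteq> 0\<close> forces the block products
  over \<open>{j+1..j+dm}\<close> to agree. Conversely, if they agree, the vector supported on \<open>j + d\<nat>\<close>
  with \<open>x\<^sub>j = 1\<close> is a common fixed point, and it lies in \<open>\<ell>\<^sub>p\<close> by comparison with
  \<open>\<Sum> 1/|w\<^sub>1\<cdots>w\<^sub>n|\<^sup>p\<close>. Condition (3) is (2) multiplied by the first \<open>j\<close> weights.
  Boundedness of the weights and \<open>p \<ge> 1\<close> only make \<open>B\<^sub>u\<close>, \<open>B\<^sub>v\<close> operators on \<open>\<ell>\<^sub>p\<close>;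
  the argument does not use them, and of the two summability hypotheses it needs only the one
  for \<open>u\<close>.
\<close>

definition shares_periodic_point :: "real \<Rightarrow> (nat \<Rightarrow> 'a::real_normed_field) \<Rightarrow> (nat \<Rightarrow> 'a) \<Rightarrow> bool"
  where "shares_periodic_point p u v \<longleftrightarrow>
    (\<exists>x. in_lp p x \<and> x \<noteq> (\<lambda>n. 0) \<and>
      (\<exists>d1 d2. d1 \<ge> 1 \<and> d2 \<ge> 1 \<and> (bws u ^^ d1) x = x \<and> (bws v ^^ d2) x = x))"

definition block_prods_agree :: "(nat \<Rightarrow> 'a::comm_monoid_mult) \<Rightarrow> (nat \<Rightarrow> 'a) \<Rightarrow> nat \<Rightarrow> nat \<Rightarrow> bool"
  where "block_prods_agree u v d j \<longleftrightarrow>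
    (\<forall>m\<ge>1. (\<Prod>k\<in>{1+j..d*m+j}. u k) = (\<Prod>k\<in>{1+j..d*m+j}. v k))"

definition prods_proportional :: "(nat \<Rightarrow> 'a::comm_ring_1) \<Rightarrow> (nat \<Rightarrow> 'a) \<Rightarrow> nat \<Rightarrow> nat \<Rightarrow> bool"
  where "prods_proportional u v d j \<longleftrightarrow>
    (\<exists>C. C \<noteq> 0 \<and> (\<forall>m. (\<Prod>k\<in>{1..d*m+j}. u k) = C * (\<Prod>k\<in>{1..d*m+j}. v k)))"

lemma prod_atLeastAtMost_split:
  fixes w :: "nat \<Rightarrow> 'a::comm_monoid_mult"
  assumes "a \<le> Suc j" "j \<le> n"
  shows "(\<Prod>k\<in>{a..n}. w k) = (\<Prod>k\<in>{a..j}. w k) * (\<Prod>k\<in>{Suc j..n}. w k)"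
  using prod.ub_add_nat[of a j w "n - j"] assms by simp

lemma bws_funpow:
  "(bws w ^^ k) x n = (\<Prod>i\<in>{Suc n..n+k}. w i) * x (n+k)"
proof (induction k arbitrary: n)
  case 0
  then show ?case by simp
next
  case (Suc k)
  have "(bws w ^^ Suc k) x n = w (Suc n) * (bws w ^^ k) x (Suc n)"
    by (simp add: bws_def)
  also have "\<dots> = w (Suc n) * ((\<Prod>i\<in>{Suc (Suc n)..Suc n+k}. w i) * x (Suc n+k))"
    using Suc by simp
  also have "\<dots> = (\<Prod>i\<in>{Suc n..n+Suc k}. w i) * x (n+Suc k)"
    by (simp add: prod.atLeast_Suc_atMost mult.assoc)
  finally show ?case .
qed

lemma bws_funpow_fixed_point_coordinate:
  assumes "(bws w ^^ d) x = x"
  shows "x j = (\<Prod>i\<in>{Suc j..j+d*m}. w i) * x (j+d*m)"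
proof -
  have "(bws w ^^ (d*m)) x = x"
    using funpow_mod_eq[where f="bws w" and n=d and m="d*m"] assms by simp
  then have "x j = (bws w ^^ (d*m)) x j"
    by simp
  then show ?thesis
    by (simp add: bws_funpow)
qed

definition bws_periodic_vector :: "(nat \<Rightarrow> 'a::real_normed_field) \<Rightarrow> nat \<Rightarrow> nat \<Rightarrow> nat \<Rightarrow> 'a"
  where "bws_periodic_vector w d j n = (if n mod d = j then 1 / (\<Prod>k\<in>{Suc j..n}. w k) else 0)"

lemma bws_periodic_vector_fixed:
  assumes wnz: "\<forall>n\<ge>1. w n \<noteq> 0"
  shows "(bws w ^^ d) (bws_periodic_vector w d j) = bws_periodic_vector w d j"
proof
  fix n
  show "(bws w ^^ d) (bws_periodic_vector w d j) n = bws_periodic_vector w d j n"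
  proof (cases "n mod d = j")
    case True
    then have "j \<le> n"
      by (metis mod_less_eq_dividend)
    then have "(\<Prod>k\<in>{Suc j..n+d}. w k) = (\<Prod>k\<in>{Suc j..n}. w k) * (\<Prod>k\<in>{Suc n..n+d}. w k)"
      by (intro prod_atLeastAtMost_split) auto
    moreover have "(\<Prod>k\<in>{Suc n..n+d}. w k) \<noteq> 0"
      using wnz by simp
    ultimately show ?thesis
      using True by (simp add: bws_funpow bws_periodic_vector_def)
  next
    case False
    then show ?thesis
      by (simp add: bws_funpow bws_periodic_vector_def)
  qed
qed

lemma in_lp_bws_periodic_vector:
  fixes w :: "nat \<Rightarrow> 'a::real_normed_field"
  assumes wnz: "\<forall>n\<ge>1. w n \<noteq> 0"
    and ws: "summable (\<lambda>n. 1 / norm (\<Prod>k\<in>{1..Suc n}. w k) powr p)"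
  shows "in_lp p (bws_periodic_vector w d j)"
proof -
  define K where "K = norm (\<Prod>k\<in>{1..j}. w k) powr p"
  have coordinate_bound:
    "norm (bws_periodic_vector w d j n) powr p \<le> K * (1 / norm (\<Prod>k\<in>{1..n}. w k) powr p)" for n
  proof (cases "n mod d = j")
    case True
    then have "j \<le> n"
      by (metis mod_less_eq_dividend)
    then have "(\<Prod>k\<in>{1..n}. w k) = (\<Prod>k\<in>{1..j}. w k) * (\<Prod>k\<in>{Suc j..n}. w k)"
      by (intro prod_atLeastAtMost_split) auto
    moreover have "(\<Prod>k\<in>{1..j}. w k) \<noteq> 0"
      using wnz by simp
    ultimately have "bws_periodic_vector w d j n = (\<Prod>k\<in>{1..j}. w k) / (\<Prod>k\<in>{1..n}. w k)"
      using True by (simp add: bws_periodic_vector_def)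
    then show ?thesis
      by (simp add: K_def norm_divide powr_divide)
  next
    case False
    then show ?thesis
      by (simp add: bws_periodic_vector_def K_def)
  qed
  have "summable (\<lambda>n. norm (bws_periodic_vector w d j (Suc n)) powr p)"
    by (rule summable_comparison_test[OF _ summable_mult[OF ws]])
      (use coordinate_bound[of "Suc _"] in auto)
  then show ?thesis
    unfolding in_lp_def by (subst summable_Suc_iff[symmetric])
qed

lemma bws_periodic_vector_eqI:
  assumes "block_prods_agree u v d j"
  shows "bws_periodic_vector u d j = bws_periodic_vector v d j"
proof
  fix n
  show "bws_periodic_vector u d j n = bws_periodic_vector v d j n"
  proof (cases "n mod d = j \<and> n div d \<noteq> 0")
    case True
    define m where "m = n div d"
    have n: "n = d * m + j"
      using True mult_div_mod_eq[of d n] by (simp add: m_def)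
    have "(\<Prod>k\<in>{1+j..d*m+j}. u k) = (\<Prod>k\<in>{1+j..d*m+j}. v k)"
      using assms True unfolding block_prods_agree_def m_def by simp
    then show ?thesis
      using True by (simp add: n bws_periodic_vector_def)
  next
    case False
    moreover have "n = j" if "n mod d = j" "n div d = 0"
      using that mult_div_mod_eq[of d n] by simp
    ultimately show ?thesis
      by (auto simp: bws_periodic_vector_def)
  qed
qed

lemma block_prods_agree_imp_shares_periodic_point:
  fixes u v :: "nat \<Rightarrow> 'a::real_normed_field"
  assumes unz: "\<forall>n\<ge>1. u n \<noteq> 0" and vnz: "\<forall>n\<ge>1. v n \<noteq> 0"
    and us: "summable (\<lambda>n. 1 / norm (\<Prod>k\<in>{1..Suc n}. u k) powr p)"
    and "1 \<le> d" "j < d" and agree: "block_prods_agree u v d j"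
  shows "shares_periodic_point p u v"
proof -
  let ?x = "bws_periodic_vector u d j"
  have "?x j = 1"
    using \<open>j < d\<close> by (simp add: bws_periodic_vector_def)
  then have "?x \<noteq> (\<lambda>n. 0)"
    by (metis zero_neq_one)
  moreover have "in_lp p ?x"
    by (rule in_lp_bws_periodic_vector[OF unz us])
  moreover have "(bws u ^^ d) ?x = ?x"
    by (rule bws_periodic_vector_fixed[OF unz])
  moreover have "(bws v ^^ d) ?x = ?x"
    unfolding bws_periodic_vector_eqI[OF agree] by (rule bws_periodic_vector_fixed[OF vnz])
  ultimately show ?thesis
    using \<open>1 \<le> d\<close> unfolding shares_periodic_point_def by blast
qed

lemma bws_common_fixed_point_imp_block_prods_agree:
  assumes "(bws u ^^ d) x = x" "(bws v ^^ d) x = x" "x j \<noteq> 0"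
  shows "block_prods_agree u v d j"
  unfolding block_prods_agree_def
proof (intro allI impI)
  fix m :: nat
  have u: "x j = (\<Prod>i\<in>{Suc j..j+d*m}. u i) * x (j+d*m)"
    and v: "x j = (\<Prod>i\<in>{Suc j..j+d*m}. v i) * x (j+d*m)"
    by (rule bws_funpow_fixed_point_coordinate[OF assms(1)],
        rule bws_funpow_fixed_point_coordinate[OF assms(2)])
  then have "x (j+d*m) \<noteq> 0"
    using assms(3) by auto
  then show "(\<Prod>k\<in>{1+j..d*m+j}. u k) = (\<Prod>k\<in>{1+j..d*m+j}. v k)"
    using u v by (simp add: add.commute)
qed

lemma bws_fixed_point_nonzero_coordinate:
  assumes wnz: "\<forall>n\<ge>1. w n \<noteq> 0" and fixed: "(bws w ^^ d) x = x"
    and "x \<noteq> (\<lambda>n. 0)" "0 < d"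
  shows "\<exists>j<d. x j \<noteq> 0"
proof -
  obtain n where "x n \<noteq> 0"
    using \<open>x \<noteq> (\<lambda>n. 0)\<close> by auto
  define j where "j = n mod d"
  have n: "n = j + d * (n div d)"
    by (simp add: j_def)
  have "x j = (\<Prod>i\<in>{Suc j..j + d * (n div d)}. w i) * x (j + d * (n div d))"
    by (rule bws_funpow_fixed_point_coordinate[OF fixed])
  moreover have "(\<Prod>i\<in>{Suc j..j + d * (n div d)}. w i) \<noteq> 0"
    using wnz by simp
  ultimately have "x j \<noteq> 0"
    using \<open>x n \<noteq> 0\<close> n by simp
  moreover have "j < d"
    using \<open>0 < d\<close> by (simp add: j_def)
  ultimately show ?thesis
    by blast
qed

lemma shares_periodic_point_imp_block_prods_agree:
  assumes unz: "\<forall>n\<ge>1. u n \<noteq> 0" and "shares_periodic_point p u v"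
  shows "\<exists>d\<ge>1. \<exists>j<d. block_prods_agree u v d j"
proof -
  obtain x d1 d2 where "x \<noteq> (\<lambda>n. 0)" "d1 \<ge> 1" "d2 \<ge> 1"
    and u_periodic: "(bws u ^^ d1) x = x" and v_periodic: "(bws v ^^ d2) x = x"
    using \<open>shares_periodic_point p u v\<close> unfolding shares_periodic_point_def by blast
  define d where "d = d1 * d2"
  have "d \<ge> 1"
    using \<open>d1 \<ge> 1\<close> \<open>d2 \<ge> 1\<close> by (simp add: d_def)
  have "(bws u ^^ d) x = x"
    using funpow_mod_eq[where f="bws u" and n=d1 and m=d] u_periodic by (simp add: d_def)
  moreover have "(bws v ^^ d) x = x"
    using funpow_mod_eq[where f="bws v" and n=d2 and m=d] v_periodic by (simp add: d_def)
  moreover obtain j where "j < d" "x j \<noteq> 0"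
    using bws_fixed_point_nonzero_coordinate[OF unz \<open>(bws u ^^ d) x = x\<close> \<open>x \<noteq> (\<lambda>n. 0)\<close>]
      \<open>d \<ge> 1\<close> by auto
  ultimately show ?thesis
    using \<open>d \<ge> 1\<close> bws_common_fixed_point_imp_block_prods_agree by blast
qed

lemma block_prods_agree_iff_prods_proportional:
  fixes u v :: "nat \<Rightarrow> 'a::field"
  assumes unz: "\<forall>n\<ge>1. u n \<noteq> 0" and vnz: "\<forall>n\<ge>1. v n \<noteq> 0"
  shows "block_prods_agree u v d j \<longleftrightarrow> prods_proportional u v d j"
proof -
  define U where "U = (\<Prod>k\<in>{1..j}. u k)"
  define V where "V = (\<Prod>k\<in>{1..j}. v k)"
  define A where "A m = (\<Prod>k\<in>{1+j..d*m+j}. u k)" for m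
  define B where "B m = (\<Prod>k\<in>{1+j..d*m+j}. v k)" for m
  have "U \<noteq> 0" "V \<noteq> 0"
    using unz vnz by (auto simp: U_def V_def)
  have prod_split: "(\<Prod>k\<in>{1..d*m+j}. w k) = (\<Prod>k\<in>{1..j}. w k) * (\<Prod>k\<in>{1+j..d*m+j}. w k)"
    for w :: "nat \<Rightarrow> 'a" and m
    by (simp add: prod_atLeastAtMost_split)
  have "A 0 = 1" "B 0 = 1"
    by (simp_all add: A_def B_def)
  then have agree: "block_prods_agree u v d j \<longleftrightarrow> (\<forall>m. A m = B m)"
    unfolding block_prods_agree_def A_def[symmetric] B_def[symmetric] by (metis less_one not_le)
  have proportional: "prods_proportional u v d j \<longleftrightarrow> (\<exists>C. C \<noteq> 0 \<and> (\<forall>m. U * A m = C * V * B m))"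
    unfolding prods_proportional_def prod_split U_def V_def A_def B_def by (simp add: mult.assoc)
  show ?thesis
  proof
    assume "block_prods_agree u v d j"
    then have "U * A m = (U / V) * V * B m" for m
      using \<open>V \<noteq> 0\<close> agree by simp
    then show "prods_proportional u v d j"
      using proportional \<open>U \<noteq> 0\<close> \<open>V \<noteq> 0\<close> by (metis divide_eq_0_iff)
  next
    assume "prods_proportional u v d j"
    then obtain C where C: "\<forall>m. U * A m = C * V * B m"
      using proportional by blast
    have "U = C * V"
      using C \<open>A 0 = 1\<close> \<open>B 0 = 1\<close> by (metis mult_1_right)
    then have "A m = B m" for m
      using C \<open>U \<noteq> 0\<close> by simp
    then show "block_prods_agree u v d j"
      using agree by blast
  qed
qed

theorem theorem4p2:
  fixes p :: real and u v :: "nat \<Rightarrow> 'a::real_normed_field"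
  assumes hp: "1 \<le> p"
    and ub: "bounded (u ` {1..})" and vb: "bounded (v ` {1..})"
    and unz: "\<forall>n\<ge>1. u n \<noteq> 0" and vnz: "\<forall>n\<ge>1. v n \<noteq> 0"
    and us: "summable (\<lambda>n. 1 / norm (\<Prod>k\<in>{1..Suc n}. u k) powr p)"
    and vs: "summable (\<lambda>n. 1 / norm (\<Prod>k\<in>{1..Suc n}. v k) powr p)"
  shows "((\<exists>x. in_lp p x \<and> x \<noteq> (\<lambda>n. 0) \<and> (\<exists>d1 d2. d1 \<ge> 1 \<and> d2 \<ge> 1 \<and>
              (bws u ^^ d1) x = x \<and> (bws v ^^ d2) x = x))
         \<longleftrightarrow> (\<exists>d\<ge>1. \<exists>j<d. \<forall>m\<ge>1.
              (\<Prod>k\<in>{1+j..d*m+j}. u k) = (\<Prod>k\<in>{1+j..d*m+j}. v k)))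
       \<and> ((\<exists>d\<ge>1. \<exists>j<d. \<forall>m\<ge>1.
              (\<Prod>k\<in>{1+j..d*m+j}. u k) = (\<Prod>k\<in>{1+j..d*m+j}. v k))
         \<longleftrightarrow> (\<exists>d\<ge>1. \<exists>j<d. \<exists>C. C \<noteq> 0 \<and> (\<forall>m.
              (\<Prod>k\<in>{1..d*m+j}. u k) = C * (\<Prod>k\<in>{1..d*m+j}. v k))))"
proof -
  have "shares_periodic_point p u v \<longleftrightarrow> (\<exists>d\<ge>1. \<exists>j<d. block_prods_agree u v d j)"
    using shares_periodic_point_imp_block_prods_agree[OF unz]
      block_prods_agree_imp_shares_periodic_point[OF unz vnz us] by blast
  moreover have "(\<exists>d\<ge>1. \<exists>j<d. block_prods_agree u v d j)
      \<longleftrightarrow> (\<exists>d\<ge>1. \<exists>j<d. prods_proportional u v d j)"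
    using block_prods_agree_iff_prods_proportional[OF unz vnz] by blast
  ultimately show ?thesis
    unfolding shares_periodic_point_def block_prods_agree_def prods_proportional_def by blast
qed

end
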